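(* Let $d\ge 2$ and let $|\psi^1\rangle,|\psi^2\rangle\in\mathbb{C}^d$ be arbitrary one-qudit states. Consider eight qudits labelled $1,\dots,8$ in the state $$|\Psi\rangle=|\psi^1\rangle_1|\psi^2\rangle_5|H\rangle_{26}|H\rangle_{34}|H\rangle_{78},$$ where $|H\rangle=\sum_{j,k\in\mathbb{Z}_d}\omega^{jk}|j\rangle|k\rangle$. For $r,s,t\in\mathbb{Z}_d$ let $|b_{rst}\rangle=(X^r\otimes Z^s\otimes X^t)\sum_{m\in\mathbb{Z}_d}|m\rangle|m\rangle|m\rangle$ (these $d^3$ vectors form an orthogonal basis $B_2$ of three qudits). Suppose qudits $1,2,3$ (in this order) are measured in $B_2$ with outcome $r,s,t$ and qudits $5,6,7$ (in this order) are measured in $B_2$ with outcome $u,v,w$. Then the resulting (unnormalised) state of qudits $4,8$, namely $(\langle b_{rst}|_{123}\otimes\langle b_{uvw}|_{567})|\Psi\rangle$, equals, up to a nonzero scalar factor independent of $\psi^1,\psi^2$, $$Z_4^{t-r}Z_8^{w-u}X_4^{s+u}X_8^{v+r}F_4F_8C_{Z(4,8)}|\psi^1\rangle_4|\psi^2\rangle_8.$$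
   Context: $\omega=e^{2\pi i/d}$; $X|j\rangle=|j+1\bmod d\rangle$, $Z|j\rangle=\omega^j|j\rangle$, $F|j\rangle=\frac1{\sqrt d}\sum_{m\in\mathbb{Z}_d}\omega^{jm}|m\rangle$. $C_{Z(4,8)}$ is the controlled-$Z$ gate $|j\rangle_4|k\rangle_8\mapsto\omega^{jk}|j\rangle_4|k\rangle_8$. Subscripts indicate the qudit on which an operator acts. *)

theory Defs
  imports Complex_Main
begin

text \<open>Qudit vectors in C^d are functions nat => complex, only the entries at indices 0..d-1
  being relevant; two-qudit vectors are functions nat => nat => complex.\<close>

definition omega :: "nat \<Rightarrow> complex" where
  "omega d = cis (2 * pi / real d)"

definition Xpow :: "nat \<Rightarrow> int \<Rightarrow> (nat \<Rightarrow> complex) \<Rightarrow> (nat \<Rightarrow> complex)" where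
  "Xpow d n f = (\<lambda>a. f (nat ((int a - n) mod int d)))"

definition Zpow :: "nat \<Rightarrow> int \<Rightarrow> (nat \<Rightarrow> complex) \<Rightarrow> (nat \<Rightarrow> complex)" where
  "Zpow d n f = (\<lambda>a. omega d powi (n * int a) * f a)"

definition Fourier :: "nat \<Rightarrow> (nat \<Rightarrow> complex) \<Rightarrow> (nat \<Rightarrow> complex)" where
  "Fourier d f = (\<lambda>m. complex_of_real (1 / sqrt (real d)) * (\<Sum>j<d. omega d ^ (j * m) * f j))"

definition on_first :: "((nat \<Rightarrow> complex) \<Rightarrow> (nat \<Rightarrow> complex)) \<Rightarrow> (nat \<Rightarrow> nat \<Rightarrow> complex) \<Rightarrow> (nat \<Rightarrow> nat \<Rightarrow> complex)" where
  "on_first O\<^sub>p \<phi> = (\<lambda>a b. O\<^sub>p (\<lambda>j. \<phi> j b) a)"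

definition on_second :: "((nat \<Rightarrow> complex) \<Rightarrow> (nat \<Rightarrow> complex)) \<Rightarrow> (nat \<Rightarrow> nat \<Rightarrow> complex) \<Rightarrow> (nat \<Rightarrow> nat \<Rightarrow> complex)" where
  "on_second O\<^sub>p \<phi> = (\<lambda>a b. O\<^sub>p (\<phi> a) b)"

definition CZ :: "nat \<Rightarrow> (nat \<Rightarrow> nat \<Rightarrow> complex) \<Rightarrow> (nat \<Rightarrow> nat \<Rightarrow> complex)" where
  "CZ d \<phi> = (\<lambda>j k. omega d ^ (j * k) * \<phi> j k)"

definition Hst :: "nat \<Rightarrow> nat \<Rightarrow> nat \<Rightarrow> complex" where
  "Hst d j k = omega d ^ (j * k)"

text \<open>|b_rst> = (X^r \<otimes> Z^s \<otimes> X^t) sum_m |m>|m>|m> = sum_m omega^(sm) |m+r>|m>|m+t>,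
  coefficient at (a,b,c) with a,b,c < d.\<close>
definition bvec :: "nat \<Rightarrow> nat \<Rightarrow> nat \<Rightarrow> nat \<Rightarrow> nat \<Rightarrow> nat \<Rightarrow> nat \<Rightarrow> complex" where
  "bvec d r s t a b c =
     (if a = (b + r) mod d \<and> c = (b + t) mod d then omega d ^ (s * b) else 0)"

definition Psi :: "nat \<Rightarrow> (nat \<Rightarrow> complex) \<Rightarrow> (nat \<Rightarrow> complex) \<Rightarrow>
    nat \<Rightarrow> nat \<Rightarrow> nat \<Rightarrow> nat \<Rightarrow> nat \<Rightarrow> nat \<Rightarrow> nat \<Rightarrow> nat \<Rightarrow> complex" where
  "Psi d \<psi>1 \<psi>2 j1 j2 j3 j4 j5 j6 j7 j8 =
     \<psi>1 j1 * \<psi>2 j5 * Hst d j2 j6 * Hst d j3 j4 * Hst d j7 j8"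

definition measured :: "nat \<Rightarrow> (nat \<Rightarrow> complex) \<Rightarrow> (nat \<Rightarrow> complex) \<Rightarrow>
    nat \<Rightarrow> nat \<Rightarrow> nat \<Rightarrow> nat \<Rightarrow> nat \<Rightarrow> nat \<Rightarrow> nat \<Rightarrow> nat \<Rightarrow> complex" where
  "measured d \<psi>1 \<psi>2 r s t u v w =
     (\<lambda>j4 j8. \<Sum>j1<d. \<Sum>j2<d. \<Sum>j3<d. \<Sum>j5<d. \<Sum>j6<d. \<Sum>j7<d.
        cnj (bvec d r s t j1 j2 j3) * cnj (bvec d u v w j5 j6 j7) *
        Psi d \<psi>1 \<psi>2 j1 j2 j3 j4 j5 j6 j7 j8)"

end

theory Submission
  imports Defs "HOL-Number_Theory.Cong"
begin

text \<open>Projecting onto \<open>|b\<^sub>r\<^sub>s\<^sub>t\<rangle>\<close> and \<open>|b\<^sub>u\<^sub>v\<^sub>w\<rangle>\<close> forces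
  \<open>j\<^sub>1 = m + r, j\<^sub>2 = m, j\<^sub>3 = m + t\<close> and \<open>j\<^sub>5 = n + u, j\<^sub>6 = n, j\<^sub>7 = n + w\<close>, so the
  measured state is a double sum over \<open>m, n\<close> of \<open>\<psi>\<^sup>1(m + r) \<psi>\<^sup>2(n + u)\<close> times a phase
  \<open>\<omega>\<^sup>L\<close> with \<open>L\<close> quadratic in \<open>m, n\<close>. On the other side, the Pauli frame, the two Fourier
  transforms and \<open>C\<^sub>Z\<close> produce a double sum over \<open>j, k\<close> of \<open>\<psi>\<^sup>1(j) \<psi>\<^sup>2(k)\<close> times
  \<open>\<omega>\<^sup>E/d\<close>. After the substitution \<open>j = m + r, k = n + u\<close> (a bijection of \<open>\<int>\<^sub>d\<close>) the two
  exponents differ by the constant \<open>rs + ru + uv\<close>, so the factor is \<open>d \<omega>\<^bsup>rs+ru+uv\<^esup>\<close>.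
  Since \<open>\<omega>\<close> is a \<open>d\<close>-th root of unity, all exponents only matter modulo \<open>d\<close>.\<close>

lemma omega_nonzero: "omega d \<noteq> 0"
  by (simp add: omega_def)

lemma omega_power_self: "omega d ^ d = 1"
  by (cases "d = 0") (simp_all add: omega_def DeMoivre)

lemma omega_powi_add: "omega d powi (x + y) = omega d powi x * omega d powi y"
  by (simp add: power_int_add omega_nonzero)

lemma omega_powi_cong:
  assumes "[x = y] (mod int d)"
  shows "omega d powi x = omega d powi y"
proof -
  obtain k where "x = y + int d * k"
    using assms by (metis cong_iff_lin cong_sym)
  then show ?thesis
    by (simp add: power_int_add power_int_mult omega_nonzero omega_power_self)
qed

lemma omega_power_cong:
  assumes "[m = n] (mod d)"
  shows "omega d ^ m = omega d ^ n"
  using omega_powi_cong[of "int m" "int n" d] assms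
  by (simp add: cong_int_iff power_int_of_nat)

lemma omega_power_mult_nat_mod:
  assumes "d > 0"
  shows "omega d ^ (j * nat (z mod int d)) = omega d powi (int j * z)"
proof -
  have "[int j * (z mod int d) = int j * z] (mod int d)"
    by (intro cong_mult cong_refl) (simp add: cong_def)
  then show ?thesis
    using assms by (simp add: omega_powi_cong flip: power_int_of_nat)
qed

lemma cnj_omega: "cnj (omega d) = inverse (omega d)"
  by (simp add: omega_def cis_cnj flip: cis_inverse)

lemma cnj_omega_power: "cnj (omega d ^ n) = omega d powi (- int n)"
  by (simp add: cnj_omega power_int_minus power_inverse)

lemma Hst_mod_left: "Hst d (j mod d) k = Hst d j k"
  unfolding Hst_def by (rule omega_power_cong) (simp add: cong_def mod_mult_left_eq)

lemma Hst_eq_omega_powi: "Hst d j k = omega d powi (int j * int k)"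
  unfolding Hst_def of_nat_mult [symmetric] power_int_of_nat ..

lemma inj_on_add_mod: "inj_on (\<lambda>m::nat. (m + r) mod d) {..<d}"
proof (rule inj_onI)
  fix x y assume "x \<in> {..<d}" "y \<in> {..<d}" "(x + r) mod d = (y + r) mod d"
  then have "[x = y] (mod d)" by (simp add: cong_def [symmetric] cong_add_rcancel_nat)
  then show "x = y" using \<open>x \<in> {..<d}\<close> \<open>y \<in> {..<d}\<close> by (simp add: cong_def)
qed

lemma sum_lessThan_shift_mod:
  fixes f :: "nat \<Rightarrow> 'a::comm_monoid_add"
  shows "(\<Sum>m<d. f ((m + r) mod d)) = (\<Sum>j<d. f j)"
proof (rule sum.reindex_bij_betw)
  have "(\<lambda>m. (m + r) mod d) ` {..<d} = {..<d}"
    by (rule endo_inj_surj) (auto simp: inj_on_add_mod)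
  then show "bij_betw (\<lambda>m. (m + r) mod d) {..<d} {..<d}"
    by (simp add: bij_betw_def inj_on_add_mod)
qed

lemma sum_bvec_collapse:
  "(\<Sum>j1<d. \<Sum>j2<d. \<Sum>j3<d. cnj (bvec d r s t j1 j2 j3) * G j1 j2 j3)
   = (\<Sum>m<d. cnj (omega d ^ (s * m)) * G ((m + r) mod d) m ((m + t) mod d))"
proof -
  have "(\<Sum>j1<d. \<Sum>j3<d. cnj (bvec d r s t j1 m j3) * G j1 m j3)
        = cnj (omega d ^ (s * m)) * G ((m + r) mod d) m ((m + t) mod d)" if "m < d" for m
  proof -
    have "cnj (bvec d r s t j1 m j3) * G j1 m j3
        = (if j3 = (m + t) mod d then if j1 = (m + r) mod d
           then cnj (omega d ^ (s * m)) * G j1 m j3 else 0 else 0)" for j1 j3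
      by (simp add: bvec_def)
    then show ?thesis using that by simp
  qed
  then show ?thesis
    by (subst sum.swap) simp
qed

lemma measured_eq_sum:
  "measured d \<psi>1 \<psi>2 r s t u v w a b =
   (\<Sum>m<d. \<Sum>n<d. omega d powi (int m * int n - int s * int m - int v * int n
       + (int m + int t) * int a + (int n + int w) * int b) * \<psi>1 ((m + r) mod d) * \<psi>2 ((n + u) mod d))"
  (is "_ = (\<Sum>m<d. \<Sum>n<d. omega d powi ?L m n * _ * _)")
proof -
  have phase: "cnj (omega d ^ (s * m)) * (cnj (omega d ^ (v * n)) *
      (x * y * Hst d m n * Hst d ((m + t) mod d) a * Hst d ((n + w) mod d) b))
    = omega d powi ?L m n * x * y" for m n x y
  proof -
    have "omega d powi ?L m n = omega d powi (- int (s * m)) * omega d powi (- int (v * n))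
       * omega d powi (int m * int n) * omega d powi ((int m + int t) * int a)
       * omega d powi ((int n + int w) * int b)"
      unfolding omega_powi_add [symmetric] by (rule arg_cong[where f = "power_int _"]) simp
    then show ?thesis
      unfolding cnj_omega_power Hst_mod_left unfolding Hst_eq_omega_powi by (simp only: mult_ac of_nat_add)
  qed
  have "measured d \<psi>1 \<psi>2 r s t u v w a b =
    (\<Sum>j1<d. \<Sum>j2<d. \<Sum>j3<d. cnj (bvec d r s t j1 j2 j3) *
      (\<Sum>j5<d. \<Sum>j6<d. \<Sum>j7<d. cnj (bvec d u v w j5 j6 j7) *
         (\<psi>1 j1 * \<psi>2 j5 * Hst d j2 j6 * Hst d j3 a * Hst d j7 b)))"
    unfolding measured_def Psi_def by (simp add: sum_distrib_left mult.assoc)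
  also have "\<dots> = (\<Sum>m<d. \<Sum>n<d. cnj (omega d ^ (s * m)) * (cnj (omega d ^ (v * n)) *
      (\<psi>1 ((m + r) mod d) * \<psi>2 ((n + u) mod d) * Hst d m n * Hst d ((m + t) mod d) a
       * Hst d ((n + w) mod d) b)))"
    by (subst sum_bvec_collapse) (simp only: sum_bvec_collapse sum_distrib_left)
  also have "\<dots> = (\<Sum>m<d. \<Sum>n<d. omega d powi ?L m n * \<psi>1 ((m + r) mod d) * \<psi>2 ((n + u) mod d))"
    by (simp only: phase)
  finally show ?thesis .
qed

lemma Pauli_frame_apply:
  "on_first (Zpow d p) (on_second (Zpow d q) (on_first (Xpow d x) (on_second (Xpow d y) \<Phi>))) a b
   = omega d powi (p * int a + q * int b) * \<Phi> (nat ((int a - x) mod int d)) (nat ((int b - y) mod int d))"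
  by (simp add: on_first_def on_second_def Zpow_def Xpow_def omega_powi_add)

lemma Fourier_Fourier_CZ_apply:
  "on_first (Fourier d) (on_second (Fourier d) (CZ d \<phi>)) a b
   = (\<Sum>j<d. \<Sum>k<d. omega d ^ (j * a + k * b + j * k) * \<phi> j k) / of_nat d"
proof -
  have "complex_of_real (1 / sqrt (real d)) * complex_of_real (1 / sqrt (real d)) = 1 / of_nat d"
    by (simp flip: of_real_mult)
  then show ?thesis
    by (simp add: on_first_def on_second_def Fourier_def CZ_def power_add sum_distrib_left
        sum_divide_distrib mult_ac)
qed

lemma Pauli_Fourier_CZ_apply:
  assumes "d > 0"
  shows "on_first (Zpow d p) (on_second (Zpow d q) (on_first (Xpow d x) (on_second (Xpow d y)
           (on_first (Fourier d) (on_second (Fourier d) (CZ d (\<lambda>j k. \<psi>1 j * \<psi>2 k))))))) a b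
         = (\<Sum>j<d. \<Sum>k<d. omega d powi (p * int a + q * int b + int j * (int a - x)
              + int k * (int b - y) + int j * int k) * \<psi>1 j * \<psi>2 k) / of_nat d"
  using power_int_of_nat[of "omega d" "j * k" for j k]
  by (simp add: Pauli_frame_apply Fourier_Fourier_CZ_apply power_add omega_power_mult_nat_mod[OF assms]
      omega_powi_add sum_distrib_left sum_divide_distrib mult_ac)

lemma measured_eq_scaled_correction:
  assumes "d > 0"
  shows "measured d \<psi>1 \<psi>2 r s t u v w a b =
    (of_nat d * omega d powi (int r * int s + int r * int u + int u * int v)) *
    on_first (Zpow d (int t - int r)) (on_second (Zpow d (int w - int u))
      (on_first (Xpow d (int s + int u)) (on_second (Xpow d (int v + int r))
        (on_first (Fourier d) (on_second (Fourier d) (CZ d (\<lambda>j k. \<psi>1 j * \<psi>2 k))))))) a b"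
proof -
  define K where "K = int r * int s + int r * int u + int u * int v"
  define E where "E = (\<lambda>j k. (int t - int r) * int a + (int w - int u) * int b
    + j * (int a - (int s + int u)) + k * (int b - (int v + int r)) + j * k)"
  define L where "L = (\<lambda>m n. int m * int n - int s * int m - int v * int n
    + (int m + int t) * int a + (int n + int w) * int b)"
  have shifted_phase: "omega d powi E (int ((m + r) mod d)) (int ((n + u) mod d))
      = omega d powi (- K) * omega d powi L m n" for m n
  proof -
    have "[E (int ((m + r) mod d)) (int ((n + u) mod d)) = E (int m + int r) (int n + int u)] (mod int d)"
      unfolding E_def by (intro cong_add cong_mult cong_refl) (simp_all add: cong_def of_nat_mod mod_simps)
    also have "E (int m + int r) (int n + int u) = - K + L m n"
      unfolding E_def K_def L_def by (simp add: algebra_simps)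
    finally show ?thesis
      by (simp add: omega_powi_cong omega_powi_add [symmetric])
  qed
  have "(\<Sum>j<d. \<Sum>k<d. omega d powi E (int j) (int k) * \<psi>1 j * \<psi>2 k)
      = (\<Sum>m<d. \<Sum>n<d. omega d powi E (int ((m + r) mod d)) (int ((n + u) mod d))
           * \<psi>1 ((m + r) mod d) * \<psi>2 ((n + u) mod d))"
    by (simp only: sum_lessThan_shift_mod[where f = "\<lambda>k. omega d powi E _ (int k) * _ * \<psi>2 k"]
        sum_lessThan_shift_mod[where f = "\<lambda>j. \<Sum>k<d. omega d powi E (int j) (int k) * \<psi>1 j * \<psi>2 k"])
  also have "\<dots> = omega d powi (- K) * measured d \<psi>1 \<psi>2 r s t u v w a b"
    unfolding measured_eq_sum shifted_phase L_def by (simp add: sum_distrib_left mult_ac)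
  finally have S: "(\<Sum>j<d. \<Sum>k<d. omega d powi E (int j) (int k) * \<psi>1 j * \<psi>2 k)
    = omega d powi (- K) * measured d \<psi>1 \<psi>2 r s t u v w a b" .
  have "omega d powi K * omega d powi (- K) = 1"
    by (simp flip: omega_powi_add)
  then show ?thesis
    using assms unfolding Pauli_Fourier_CZ_apply[OF assms] S[unfolded E_def] K_def
    by (simp add: field_simps)
qed

theorem lemma1:
  fixes d r s t u v w :: nat
  assumes "d \<ge> 2"
    and "r < d" "s < d" "t < d" "u < d" "v < d" "w < d"
  shows "\<exists>c::complex. c \<noteq> 0 \<and>
    (\<forall>\<psi>1 \<psi>2 :: nat \<Rightarrow> complex. \<forall>a<d. \<forall>b<d.
       measured d \<psi>1 \<psi>2 r s t u v w a b =
       c * (on_first (Zpow d (int t - int r))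
             (on_second (Zpow d (int w - int u))
               (on_first (Xpow d (int s + int u))
                 (on_second (Xpow d (int v + int r))
                   (on_first (Fourier d)
                     (on_second (Fourier d)
                       (CZ d (\<lambda>j k. \<psi>1 j * \<psi>2 k)))))))) a b)"
proof -
  have d: "d > 0" using assms(1) by simp
  let ?c = "of_nat d * omega d powi (int r * int s + int r * int u + int u * int v) :: complex"
  have "?c \<noteq> 0" using d by (simp add: omega_nonzero)
  moreover have "measured d \<psi>1 \<psi>2 r s t u v w a b = ?c * (on_first (Zpow d (int t - int r))
      (on_second (Zpow d (int w - int u)) (on_first (Xpow d (int s + int u))
        (on_second (Xpow d (int v + int r)) (on_first (Fourier d) (on_second (Fourier d)
          (CZ d (\<lambda>j k. \<psi>1 j * \<psi>2 k)))))))) a b" for \<psi>1 \<psi>2 a b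
    by (rule measured_eq_scaled_correction[OF d])
  ultimately show ?thesis by blast
qed

end
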